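(* Let $g:\mathbb{R}\to\mathbb{R}$ be periodic with period $T$, i.e. $g(x+T)=g(x)$ for all $x$, and assume there exist $x_1,x_2\in\mathbb{R}$ with $0<x_2-x_1<T$ such that $g$ is continuous on $[x_1,x_2]$; set $M_1=\min_{x\in[x_1,x_2]}g(x)$ and $M_2=\max_{x\in[x_1,x_2]}g(x)$. Let $K\in\mathbb{N}^+$, let $\alpha\in\mathbb{R}$ be transcendental, and let $r_1,\dots,r_K\in\mathbb{Q}$ be pairwise distinct. Then (1) the set $\{[g(\tfrac{w}{\alpha+r_1}),\dots,g(\tfrac{w}{\alpha+r_K})]^T: w\in\mathbb{R}\}$ is dense in $[M_1,M_2]^K$ (i.e., every point of $[M_1,M_2]^K$ is a limit of points of this set); and (2) if $M_1<M_2$, then the set $\{[u\,g(\tfrac{w}{\alpha+r_1})+v,\dots,u\,g(\tfrac{w}{\alpha+r_K})+v]^T: u,v,w\in\mathbb{R}\}$ is dense in $\mathbb{R}^K$.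
   Context: A real number is transcendental if it is not a root of any nonzero polynomial with rational coefficients. *)

theory Defs
  imports "HOL-Analysis.Analysis" "HOL-Computational_Algebra.Polynomial"
begin

definition transcendental_real :: "real \<Rightarrow> bool" where
  "transcendental_real x \<longleftrightarrow>
     \<not> (\<exists>p :: real poly. p \<noteq> 0 \<and> (\<forall>i. coeff p i \<in> \<rat>) \<and> poly p x = 0)"

end

theory Submission
  imports Defs "HOL-Analysis.Kronecker_Approximation_Theorem"
begin

(* The numbers 1 / (\<alpha> + r_i) are linearly independent over \<rat>: clearing denominators in a
   rational relation among them gives a rational polynomial vanishing at the transcendental \<alpha>,
   hence the zero polynomial, and evaluating it at -r_k isolates the k-th coefficient.
   Kronecker's theorem then makes the line w \<mapsto> (w / (\<alpha> + r_i))_i dense modulo the lattice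
   T\<int>^K, so by periodicity the vectors (g (w / (\<alpha> + r_i)))_i approximate (g s_i)_i whenever g
   is continuous at every s_i, in particular for s_i in the open interval (x1, x2). By the
   intermediate value theorem g maps (x1, x2) onto a dense subset of [M1, M2]. For part (2),
   every point of \<real>^K is u y + v for some y in the cube [M1, M2]^K once u is large. *)

lemma transcendental_real_iff_not_algebraic: "transcendental_real x \<longleftrightarrow> \<not> algebraic x"
  unfolding transcendental_real_def algebraic_altdef by blast

lemma not_algebraic_add_of_rat_nonzero:
  fixes \<alpha> :: "'a::field_char_0"
  assumes "\<not> algebraic \<alpha>"
  shows "\<alpha> + of_rat q \<noteq> 0"
proof
  assume "\<alpha> + of_rat q = 0"
  then have "\<alpha> \<in> \<rat>"
    by (metis Rats_minus_iff Rats_of_rat add_eq_0_iff)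
  with assms show False
    by (simp add: rat_imp_algebraic)
qed

lemma coeff_prod_in_Rats:
  fixes f :: "'b \<Rightarrow> 'a::field_char_0 poly"
  assumes "\<And>x i. x \<in> A \<Longrightarrow> coeff (f x) i \<in> \<rat>"
  shows "coeff (\<Prod>x\<in>A. f x) i \<in> \<rat>"
  using assms
proof (induction A arbitrary: i rule: infinite_finite_induct)
  case (insert x F)
  then show ?case
    by (auto simp: coeff_mult intro!: Rats_mult)
qed auto

lemma sum_divide_mult_prod:
  fixes a c :: "'b \<Rightarrow> 'a::field"
  assumes "finite S" "\<And>k. k \<in> S \<Longrightarrow> a k \<noteq> 0"
  shows "(\<Sum>k\<in>S. c k / a k) * (\<Prod>k\<in>S. a k) = (\<Sum>k\<in>S. c k * (\<Prod>j\<in>S-{k}. a j))"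
  unfolding sum_distrib_right
proof (rule sum.cong)
  fix k assume "k \<in> S"
  then show "c k / a k * prod a S = c k * (\<Prod>j\<in>S-{k}. a j)"
    using assms by (simp add: prod.remove)
qed simp

lemma sum_mult_prod_remove_at_zero:
  fixes a c :: "'b \<Rightarrow> 'a::field"
  assumes "finite S" "k0 \<in> S" "a k0 = 0"
  shows "(\<Sum>k\<in>S. c k * (\<Prod>j\<in>S-{k}. a j)) = c k0 * (\<Prod>j\<in>S-{k0}. a j)"
proof -
  have "(\<Sum>k\<in>S-{k0}. c k * (\<Prod>j\<in>S-{k}. a j)) = 0"
    using assms by (intro sum.neutral) force
  then show ?thesis
    using assms by (simp add: sum.remove)
qed

lemma inverse_rational_shifts_rational_combination_eq_0:
  fixes \<alpha> :: real and \<rho> c :: "'b \<Rightarrow> rat"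
  assumes \<alpha>: "\<not> algebraic \<alpha>" and S: "finite S" "inj_on \<rho> S" "k0 \<in> S"
    and sum_eq_0: "(\<Sum>k\<in>S. of_rat (c k) / (\<alpha> + of_rat (\<rho> k))) = 0"
  shows "c k0 = 0"
proof (rule ccontr)
  assume "c k0 \<noteq> 0"
  define p :: "real poly"
    where "p = (\<Sum>k\<in>S. smult (of_rat (c k)) (\<Prod>j\<in>S-{k}. [:of_rat (\<rho> j), 1:]))"
  have poly_p: "poly p x = (\<Sum>k\<in>S. of_rat (c k) * (\<Prod>j\<in>S-{k}. x + of_rat (\<rho> j)))" for x
    by (simp add: p_def poly_sum poly_prod add.commute)
  have "coeff p i \<in> \<rat>" for i
    unfolding p_def coeff_sum coeff_smult
    by (intro Rats_sum Rats_mult coeff_prod_in_Rats) (auto simp: coeff_pCons split: nat.split)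
  moreover have "poly p \<alpha> = 0"
    using sum_divide_mult_prod[OF S(1), of "\<lambda>k. \<alpha> + of_rat (\<rho> k)" "\<lambda>k. of_rat (c k)"]
    by (simp add: poly_p sum_eq_0 not_algebraic_add_of_rat_nonzero[OF \<alpha>])
  moreover have "p \<noteq> 0"
  proof
    assume "p = 0"
    then have "0 = poly p (- of_rat (\<rho> k0))"
      by simp
    also have "\<dots> = of_rat (c k0) * (\<Prod>j\<in>S-{k0}. of_rat (\<rho> j) - of_rat (\<rho> k0))"
      using sum_mult_prod_remove_at_zero[OF S(1) S(3), of "\<lambda>j. - of_rat (\<rho> k0) + of_rat (\<rho> j)"]
      by (simp add: poly_p)
    also have "\<dots> \<noteq> 0"
      using \<open>c k0 \<noteq> 0\<close> S inj_on_contraD by fastforce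
    finally show False
      by simp
  qed
  ultimately show False
    using \<alpha> algebraicI' by blast
qed

lemma inj_inverse_rational_shifts:
  fixes \<alpha> :: real and \<rho> :: "'b \<Rightarrow> rat"
  assumes "inj \<rho>"
  shows "inj (\<lambda>i. 1 / (\<alpha> + of_rat (\<rho> i)))"
  using assms by (auto intro!: injI dest: injD)

lemma independent_inverse_rational_shifts:
  fixes \<rho> :: "'b \<Rightarrow> rat"
  assumes \<alpha>: "\<not> algebraic \<alpha>" and "inj \<rho>"
  shows "module.independent (\<lambda>k. (*) (real_of_int k)) (range (\<lambda>i. 1 / (\<alpha> + of_rat (\<rho> i))))"
proof -
  interpret Modules.module "\<lambda>k. (*) (real_of_int k)"
    by unfold_locales (simp_all add: algebra_simps)
  define \<theta> where "\<theta> i = 1 / (\<alpha> + of_rat (\<rho> i))" for i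
  have "inj \<theta>"
    unfolding \<theta>_def using \<open>inj \<rho>\<close> by (rule inj_inverse_rational_shifts)
  show ?thesis
    unfolding \<theta>_def[symmetric] independent_explicit_module
  proof (intro allI impI)
    fix t u v
    assume t: "finite t" "t \<subseteq> range \<theta>" and sum_eq_0: "(\<Sum>v\<in>t. real_of_int (u v) * v) = 0"
      and "v \<in> t"
    define S where "S = \<theta> -` t"
    have t_eq: "t = \<theta> ` S"
      using t by (auto simp: S_def)
    obtain k0 where k0: "k0 \<in> S" "v = \<theta> k0"
      using \<open>v \<in> t\<close> t_eq by auto
    have "finite S"
      using t \<open>inj \<theta>\<close> by (simp add: S_def finite_vimageI)
    have "inj_on \<rho> S" "inj_on \<theta> S"
      using \<open>inj \<rho>\<close> \<open>inj \<theta>\<close> by (auto intro: inj_on_subset)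
    then have "(\<Sum>k\<in>S. real_of_int (u (\<theta> k)) * \<theta> k) = 0"
      using sum_eq_0 unfolding t_eq by (simp add: sum.reindex)
    then have "(\<Sum>k\<in>S. of_rat (of_int (u (\<theta> k))) / (\<alpha> + of_rat (\<rho> k))) = 0"
      by (simp add: \<theta>_def)
    with \<open>finite S\<close> \<open>inj_on \<rho> S\<close> \<open>k0 \<in> S\<close> have "of_int (u (\<theta> k0)) = (0::rat)"
      by (rule inverse_rational_shifts_rational_combination_eq_0[OF \<alpha>])
    then show "u v = 0"
      by (simp add: k0)
  qed
qed

lemma Kronecker_thm_finite_index:
  fixes \<theta> \<beta> :: "'n::finite \<Rightarrow> real"
  assumes indep: "module.independent (\<lambda>k. (*) (real_of_int k)) (range \<theta>)"
    and "inj \<theta>" and "\<epsilon> > 0"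
  obtains t h where "\<And>i. \<bar>t * \<theta> i - of_int (h i) - \<beta> i\<bar> < \<epsilon>"
proof -
  obtain e where e: "bij_betw e {..<CARD('n)} (UNIV :: 'n set)"
    using ex_bij_betw_nat_finite[of "UNIV :: 'n set"] by (auto simp: atLeast0LessThan)
  have "(\<theta> \<circ> e) ` {..<CARD('n)} = range \<theta>"
    using bij_betw_imp_surj_on[OF e] by (metis image_comp)
  then have indep_e: "module.independent (\<lambda>k. (*) (real_of_int k)) ((\<theta> \<circ> e) ` {..<CARD('n)})"
    using indep by simp
  have inj_e: "inj_on (\<theta> \<circ> e) {..<CARD('n)}"
    using e \<open>inj \<theta>\<close> by (auto intro: comp_inj_on bij_betw_imp_inj_on inj_on_subset)
  obtain t h where th: "\<And>k. k < CARD('n) \<Longrightarrow> \<bar>t * (\<theta> \<circ> e) k - of_int (h k) - (\<beta> \<circ> e) k\<bar> < \<epsilon>"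
    using Kronecker_thm_1[OF indep_e inj_e \<open>\<epsilon> > 0\<close>] by blast
  have "\<bar>t * \<theta> i - of_int (h (inv_into {..<CARD('n)} e i)) - \<beta> i\<bar> < \<epsilon>" for i
    using th[of "inv_into {..<CARD('n)} e i"] bij_betwE[OF bij_betw_inv_into[OF e]]
      bij_betw_inv_into_right[OF e]
    by auto
  then show thesis
    by (rule that)
qed

lemma Kronecker_dense_modulo_period:
  fixes \<theta> :: "'n::finite \<Rightarrow> real"
  assumes indep: "module.independent (\<lambda>k. (*) (real_of_int k)) (range \<theta>)"
    and "inj \<theta>" and "T > 0"
  shows "closure {(\<chi> i. w * \<theta> i - of_int (h i) * T) | w h. True} = UNIV"
proof -
  have "x \<in> closure {(\<chi> i. w * \<theta> i - of_int (h i) * T) | w h. True}" for x :: "real ^ 'n"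
    unfolding closure_approachable
  proof (intro allI impI)
    fix \<epsilon> :: real
    assume "\<epsilon> > 0"
    then have "\<epsilon> / (T * CARD('n)) > 0"
      using \<open>T > 0\<close> by simp
    then obtain t h where th: "\<And>i. \<bar>t * \<theta> i - of_int (h i) - x $ i / T\<bar> < \<epsilon> / (T * CARD('n))"
      by (rule Kronecker_thm_finite_index[OF indep \<open>inj \<theta>\<close>, where \<beta> = "\<lambda>i. x $ i / T"]) blast
    define z where "z = (\<chi> i. (t * T) * \<theta> i - of_int (h i) * T)"
    have "\<bar>z $ i - x $ i\<bar> = T * \<bar>t * \<theta> i - of_int (h i) - x $ i / T\<bar>" for i
    proof -
      have "z $ i - x $ i = T * (t * \<theta> i - of_int (h i) - x $ i / T)"
        using \<open>T > 0\<close> by (simp add: z_def field_simps)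
      then show ?thesis
        using \<open>T > 0\<close> by (simp add: abs_mult)
    qed
    then have "\<bar>z $ i - x $ i\<bar> < \<epsilon> / CARD('n)" for i
      using th[of i] \<open>T > 0\<close> by (simp add: field_simps)
    then have "dist z x < \<epsilon>"
      using norm_le_l1_cart[of "z - x"] sum_strict_mono[of UNIV "\<lambda>i. \<bar>z $ i - x $ i\<bar>" "\<lambda>_. \<epsilon> / CARD('n)"]
      by (simp add: dist_norm)
    then show "\<exists>y\<in>{(\<chi> i. w * \<theta> i - of_int (h i) * T) | w h. True}. dist y x < \<epsilon>"
      unfolding z_def by blast
  qed
  then show ?thesis
    by auto
qed

lemma periodic_add_of_int_mult:
  fixes g :: "real \<Rightarrow> 'a"
  assumes periodic: "\<And>x. g (x + T) = g x"
  shows "g (x + of_int h * T) = g x"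
proof (induction h rule: int_induct[where k = 0])
  case (step1 i)
  have "x + of_int (i + 1) * T = (x + of_int i * T) + T"
    by (simp add: algebra_simps)
  then show ?case
    using periodic step1 by metis
next
  case (step2 i)
  have "x + of_int i * T = (x + of_int (i - 1) * T) + T"
    by (simp add: algebra_simps)
  then show ?case
    using periodic step2 by metis
qed simp

lemma isCont_closure_image:
  assumes "isCont f x" "x \<in> closure S"
  shows "f x \<in> closure (f ` S)"
  unfolding closure_iff_nhds_not_empty
proof (intro allI impI)
  fix U V
  assume "V \<subseteq> U" "open V" "f x \<in> V"
  then obtain W where "open W" "x \<in> W" "\<And>y. y \<in> W \<Longrightarrow> f y \<in> V"
    using assms(1)[unfolded continuous_at_open, rule_format, of V] \<open>open V\<close> \<open>f x \<in> V\<close>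
    by auto
  moreover have "S \<inter> W \<noteq> {}"
    using assms(2)[unfolded closure_iff_nhds_not_empty, rule_format, of W W] \<open>open W\<close> \<open>x \<in> W\<close>
    by simp
  ultimately show "f ` S \<inter> U \<noteq> {}"
    using \<open>V \<subseteq> U\<close> by blast
qed

lemma vector_box_closure_subset:
  "{x :: 'a::topological_space ^ 'n. \<forall>i. x $ i \<in> closure (A i)} \<subseteq> closure {x. \<forall>i. x $ i \<in> A i}"
proof
  fix x :: "'a ^ 'n"
  assume "x \<in> {x. \<forall>i. x $ i \<in> closure (A i)}"
  then have x: "x $ i \<in> closure (A i)" for i
    by simp
  show "x \<in> closure {x. \<forall>i. x $ i \<in> A i}"
    unfolding closure_iff_nhds_not_empty
  proof (intro allI impI)
    fix U V :: "('a ^ 'n) set"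
    assume "V \<subseteq> U" "open V" "x \<in> V"
    obtain B where B: "\<forall>i. open (B i) \<and> x $ i \<in> B i" "\<forall>y. (\<forall>i. y $ i \<in> B i) \<longrightarrow> y \<in> V"
      using \<open>open V\<close> \<open>x \<in> V\<close> unfolding open_vec_def by auto
    have "\<exists>a. a \<in> A i \<inter> B i" for i
      using x[of i, unfolded closure_iff_nhds_not_empty, rule_format, of "B i" "B i"] B(1) by auto
    then obtain a where "\<And>i. a i \<in> A i \<inter> B i"
      by metis
    then have "(\<chi> i. a i) \<in> {x. \<forall>i. x $ i \<in> A i} \<inter> U"
      using B(2) \<open>V \<subseteq> U\<close> by auto
    then show "{x. \<forall>i. x $ i \<in> A i} \<inter> U \<noteq> {}"
      by blast
  qed
qed

lemma Icc_Inf_Sup_image_subset_closure: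
  fixes g :: "real \<Rightarrow> real"
  assumes "continuous_on {a..b} g" "a < b"
  shows "{Inf (g ` {a..b})..Sup (g ` {a..b})} \<subseteq> closure (g ` {a<..<b})"
proof -
  obtain c d where "g ` {a..b} = {c..d}" "c \<le> d"
    using continuous_image_closed_interval[of a b g] assms by auto
  then have "{Inf (g ` {a..b})..Sup (g ` {a..b})} = g ` closure {a<..<b}"
    using assms(2) by simp
  also have "\<dots> \<subseteq> closure (g ` {a<..<b})"
    using assms by (intro continuous_image_closure_subset) auto
  finally show ?thesis .
qed

lemma continuity_values_in_closure_periodic_line_image:
  fixes g :: "real \<Rightarrow> 'a::topological_space" and \<theta> :: "'n::finite \<Rightarrow> real"
  assumes periodic: "\<And>x. g (x + T) = g x"
    and dense: "closure {(\<chi> i. w * \<theta> i - of_int (h i) * T) | w h. True} = UNIV"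
    and cont: "\<And>i. isCont g (s $ i)"
  shows "(\<chi> i. g (s $ i)) \<in> closure (range (\<lambda>w. \<chi> i. g (w * \<theta> i)))"
proof -
  let ?L = "{(\<chi> i. w * \<theta> i - of_int (h i) * T) | w h. True}"
  have "isCont (\<lambda>x. \<chi> i. g (x $ i)) s"
    unfolding isCont_def
    by (intro tendsto_vec_lambda isCont_tendsto_compose[OF cont] tendsto_vec_nth tendsto_ident_at)
  then have "(\<chi> i. g (s $ i)) \<in> closure ((\<lambda>x. \<chi> i. g (x $ i)) ` ?L)"
    using dense by (intro isCont_closure_image) auto
  also have "(\<lambda>x. \<chi> i. g (x $ i)) ` ?L \<subseteq> range (\<lambda>w. \<chi> i. g (w * \<theta> i))"
  proof -
    have "g (y - of_int k * T) = g y" for y k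
      using periodic_add_of_int_mult[of g T y "- k", OF periodic] by simp
    then show ?thesis
      by auto
  qed
  then have "closure ((\<lambda>x. \<chi> i. g (x $ i)) ` ?L) \<subseteq> closure (range (\<lambda>w. \<chi> i. g (w * \<theta> i)))"
    by (rule closure_mono)
  finally show ?thesis .
qed

lemma cube_subset_closure_periodic_line_image:
  fixes g :: "real \<Rightarrow> real" and \<theta> :: "'n::finite \<Rightarrow> real"
  assumes periodic: "\<And>x. g (x + T) = g x"
    and dense: "closure {(\<chi> i. w * \<theta> i - of_int (h i) * T) | w h. True} = UNIV"
    and cont: "continuous_on {a..b} g" and "a < b"
  shows "{y. \<forall>i. Inf (g ` {a..b}) \<le> y $ i \<and> y $ i \<le> Sup (g ` {a..b})}
           \<subseteq> closure (range (\<lambda>w. \<chi> i. g (w * \<theta> i)))"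
proof -
  let ?G = "range (\<lambda>w. \<chi> i. g (w * \<theta> i))"
  \<comment> \<open>Continuity on \<open>{a..b}\<close> is relative: \<open>g\<close> is continuous as a map on \<open>\<real>\<close> only inside.\<close>
  have interior_values: "{y. \<forall>i. y $ i \<in> g ` {a<..<b}} \<subseteq> closure ?G"
  proof
    fix y :: "real ^ 'n"
    assume "y \<in> {y. \<forall>i. y $ i \<in> g ` {a<..<b}}"
    then have "\<forall>i. \<exists>t\<in>{a<..<b}. y $ i = g t"
      by (simp add: image_iff)
    then obtain s where s: "\<And>i. s i \<in> {a<..<b} \<and> y $ i = g (s i)"
      by metis
    define t :: "real ^ 'n" where "t = (\<chi> i. s i)"
    have "isCont g (t $ i)" for i
      using continuous_on_interior[OF cont] s by (simp add: t_def)
    then have "(\<chi> i. g (t $ i)) \<in> closure ?G"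
      by (rule continuity_values_in_closure_periodic_line_image[where g = g, OF periodic dense])
    moreover have "y = (\<chi> i. g (t $ i))"
      using s by (simp add: t_def vec_eq_iff)
    ultimately show "y \<in> closure ?G"
      by simp
  qed
  have "{Inf (g ` {a..b})..Sup (g ` {a..b})} \<subseteq> closure (g ` {a<..<b})"
    using cont \<open>a < b\<close> by (rule Icc_Inf_Sup_image_subset_closure)
  then have "{y. \<forall>i. Inf (g ` {a..b}) \<le> y $ i \<and> y $ i \<le> Sup (g ` {a..b})}
               \<subseteq> {y. \<forall>i. y $ i \<in> closure (g ` {a<..<b})}"
    by auto
  also have "\<dots> \<subseteq> closure {y. \<forall>i. y $ i \<in> g ` {a<..<b}}"
    by (rule vector_box_closure_subset)
  also have "\<dots> \<subseteq> closure ?G"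
    using interior_values by (simp add: closure_minimal)
  finally show ?thesis .
qed

lemma affine_images_dense_if_cube_in_closure:
  fixes F :: "'b \<Rightarrow> real ^ 'n"
  assumes "M1 < M2" and cube: "{y. \<forall>i. M1 \<le> y $ i \<and> y $ i \<le> M2} \<subseteq> closure (range F)"
  shows "closure {(\<chi> i. u * F w $ i + v) | u v w. True} = UNIV"
proof -
  let ?S = "{(\<chi> i. u * F w $ i + v) | u v w. True}"
  have "z \<in> closure ?S" for z :: "real ^ 'n"
  proof -
    define u where "u = 2 * (norm z + 1) / (M2 - M1)"
    define c where "c = (M1 + M2) / 2"
    define f where "f x = (\<chi> i. u * x $ i - u * c)" for x :: "real ^ 'n"
    define y where "y = (\<chi> i. c + z $ i / u)"
    have "u > 0"
      using \<open>M1 < M2\<close> by (simp add: u_def add_nonneg_pos)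
    have bound: "\<bar>z $ i / u\<bar> \<le> (M2 - M1) / 2" for i
    proof -
      have "\<bar>z $ i / u\<bar> = (M2 - M1) / 2 * (\<bar>z $ i\<bar> / (norm z + 1))"
        using \<open>M1 < M2\<close> \<open>u > 0\<close> by (simp add: u_def abs_mult)
      also have "\<dots> \<le> (M2 - M1) / 2"
        using component_le_norm_cart[of z i] \<open>M1 < M2\<close>
        by (intro mult_left_le) (simp_all add: add_nonneg_pos)
      finally show ?thesis .
    qed
    have c_add: "M1 \<le> c + t \<and> c + t \<le> M2" if "\<bar>t\<bar> \<le> (M2 - M1) / 2" for t
      using that unfolding c_def abs_le_iff by (auto simp: field_simps)
    have "y \<in> {y. \<forall>i. M1 \<le> y $ i \<and> y $ i \<le> M2}"
      using c_add[OF bound] by (simp add: y_def)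
    moreover have "z = f y"
      using \<open>u > 0\<close> by (simp add: f_def y_def vec_eq_iff field_simps)
    ultimately have "z \<in> f ` closure (range F)"
      using cube by (intro image_eqI) auto
    also have "\<dots> \<subseteq> closure ?S"
    proof (rule image_closure_subset)
      show "continuous_on (closure (range F)) f"
        unfolding f_def by (intro continuous_intros)
      have "f (F w) \<in> ?S" for w
        unfolding f_def by (intro CollectI exI[of _ u] exI[of _ "- u * c"] exI[of _ w]) simp
      then show "f ` range F \<subseteq> closure ?S"
        using closure_subset by blast
    qed simp
    finally show ?thesis .
  qed
  then show ?thesis
    by blast
qed

theorem proposition20:
  fixes g :: "real \<Rightarrow> real" and T x1 x2 \<alpha> :: real and r :: "'n::finite \<Rightarrow> rat"
  assumes periodic: "\<And>x. g (x + T) = g x"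
    and interval: "0 < x2 - x1" "x2 - x1 < T"
    and cont: "continuous_on {x1..x2} g"
    and transc: "transcendental_real \<alpha>"
    and distinct: "inj r"
  defines "M1 \<equiv> Inf (g ` {x1..x2})" and "M2 \<equiv> Sup (g ` {x1..x2})"
  shows "({y :: real ^ 'n. \<forall>i. M1 \<le> y $ i \<and> y $ i \<le> M2}
           \<subseteq> closure (range (\<lambda>w. \<chi> i. g (w / (\<alpha> + of_rat (r i))))))
         \<and> (M1 < M2 \<longrightarrow>
           closure {(\<chi> i. u * g (w / (\<alpha> + of_rat (r i))) + v) :: real ^ 'n | u v w. True}
             = UNIV)"
proof -
  define \<theta> where "\<theta> i = 1 / (\<alpha> + of_rat (r i))" for i
  have "\<not> algebraic \<alpha>"
    using transc by (simp add: transcendental_real_iff_not_algebraic)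
  then have dense: "closure {(\<chi> i. w * \<theta> i - of_int (h i) * T) | w h. True} = UNIV"
    using interval distinct unfolding \<theta>_def[abs_def]
    by (intro Kronecker_dense_modulo_period independent_inverse_rational_shifts inj_inverse_rational_shifts) auto
  have cube: "{y. \<forall>i. M1 \<le> y $ i \<and> y $ i \<le> M2} \<subseteq> closure (range (\<lambda>w. \<chi> i. g (w / (\<alpha> + of_rat (r i)))))"
    using cube_subset_closure_periodic_line_image[where g = g, OF periodic dense cont] interval
    by (simp add: M1_def M2_def \<theta>_def)
  show ?thesis
    using cube affine_images_dense_if_cube_in_closure[OF _ cube] by simp
qed

end
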